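(* Let $N$ be a binary orchard network with $k$ reticulations at the top, with horizontal arcs at the top $(x_1,y_1),\dots,(x_k,y_k)$, and let $t$ be an HGT-consistent labelling of $N$. Then $t(x_i)=t(y_i)$ for every $i\in\{1,\dots,k\}$.
   Context: A (directed phylogenetic) network on a finite taxa set $X$ is a directed acyclic graph without parallel arcs whose nodes are of the following types: a unique root (indegree 0, outdegree 1); tree nodes (indegree 1, outdegree at least 2); reticulations (indegree at least 2, outdegree 1); leaves (indegree 1, outdegree 0), the leaves being bijectively labelled by $X$. Non-leaf nodes are called internal. A network is binary if every tree node and every reticulation has total degree exactly 3. An arc $(u,v)$ is a reticulation arc if $v$ is a reticulation. A tree is a network without reticulations. Orchard networks: An ordered pair of leaves $(x,y)$ is a cherry if $x$ and $y$ have a common parent; it is a reticulated cherry if the parent $p_x$ of $x$ is a reticulation and $p_x$ and $y$ have a common parent. Let $p_x,p_y$ be the parents of $x,y$. Reducing $(x,y)$ in a network $N$: if $(x,y)$ is a cherry, delete $x$ and suppress $p_x$ if it now has indegree 1 and outdegree 1; if $(x,y)$ is a reticulated cherry, delete the arc $(p_y,p_x)$ and suppress any resulting node of indegree 1 and outdegree 1; otherwise do nothing. (Suppressing a node $v$ with one parent $u$ and one child $w$ means deleting $v$ and adding the arc $(u,w)$.) $N$ is orchard if some sequence of such reductions turns $N$ into a tree with exactly one leaf. HGT-consistent labelling: Let $N$ be a binary network with node set $V$. An HGT-consistent labelling of $N$ is a map $t:V\to\mathbb{R}$ such that (1) for every arc $(u,v)$, $t(u)\le t(v)$, and equality is allowed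 only if $v$ is a reticulation; (2) every internal node $u$ has a child $v$ with $t(u)<t(v)$; (3) for every reticulation $r$ with parents $u$ and $v$, exactly one of $t(u)=t(r)$ and $t(v)=t(r)$ holds. Reticulations at the top: Let $N$ be a binary orchard network and $v_\rho$ the child of the root. $N$ has $k$ reticulations at the top if it contains two directed paths $v_\rho,a_1,\dots,a_k$ and $v_\rho,b_1,\dots,b_k$ with all $a_i,b_j$ distinct, and $k$ reticulation arcs $(x_i,y_i)$, $i=1,\dots,k$, with $\{x_i,y_i\}=\{a_i,b_i\}$; moreover there is no arc between the child of $y_k$ and the child of $x_k$ other than $y_k$. The arcs $(x_i,y_i)$ are the horizontal arcs at the top (the lowest one being $(x_k,y_k)$), and $y_1,\dots,y_k$ are the reticulations at the top. *)

theory Defs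
  imports Main "HOL.Real"
begin

text \<open>A directed graph is given by a node set V and an arc set A (a set of pairs,
so there are no parallel arcs). Leaves are identified with their taxon labels.\<close>

definition indeg :: "('a \<times> 'a) set \<Rightarrow> 'a \<Rightarrow> nat" where
  "indeg A v = card {u. (u, v) \<in> A}"

definition outdeg :: "('a \<times> 'a) set \<Rightarrow> 'a \<Rightarrow> nat" where
  "outdeg A v = card {w. (v, w) \<in> A}"

definition is_root :: "('a \<times> 'a) set \<Rightarrow> 'a \<Rightarrow> bool" where
  "is_root A v \<longleftrightarrow> indeg A v = 0 \<and> outdeg A v = 1"

definition is_tree_node :: "('a \<times> 'a) set \<Rightarrow> 'a \<Rightarrow> bool" where
  "is_tree_node A v \<longleftrightarrow> indeg A v = 1 \<and> outdeg A v \<ge> 2"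

definition is_reticulation :: "('a \<times> 'a) set \<Rightarrow> 'a \<Rightarrow> bool" where
  "is_reticulation A v \<longleftrightarrow> indeg A v \<ge> 2 \<and> outdeg A v = 1"

definition is_leaf :: "('a \<times> 'a) set \<Rightarrow> 'a \<Rightarrow> bool" where
  "is_leaf A v \<longleftrightarrow> indeg A v = 1 \<and> outdeg A v = 0"

definition network :: "'a set \<Rightarrow> ('a \<times> 'a) set \<Rightarrow> bool" where
  "network V A \<longleftrightarrow> finite V \<and> A \<subseteq> V \<times> V \<and> acyclic A
     \<and> (\<exists>!r. r \<in> V \<and> is_root A r)
     \<and> (\<forall>v\<in>V. is_root A v \<or> is_tree_node A v \<or> is_reticulation A v \<or> is_leaf A v)"

definition binary_network :: "'a set \<Rightarrow> ('a \<times> 'a) set \<Rightarrow> bool" where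
  "binary_network V A \<longleftrightarrow> network V A
     \<and> (\<forall>v\<in>V. is_tree_node A v \<longrightarrow> outdeg A v = 2)
     \<and> (\<forall>v\<in>V. is_reticulation A v \<longrightarrow> indeg A v = 2)"

definition is_tree :: "'a set \<Rightarrow> ('a \<times> 'a) set \<Rightarrow> bool" where
  "is_tree V A \<longleftrightarrow> network V A \<and> (\<forall>v\<in>V. \<not> is_reticulation A v)"

definition parent :: "('a \<times> 'a) set \<Rightarrow> 'a \<Rightarrow> 'a" where
  "parent A v = (THE u. (u, v) \<in> A)"

definition child :: "('a \<times> 'a) set \<Rightarrow> 'a \<Rightarrow> 'a" where
  "child A v = (THE w. (v, w) \<in> A)"

definition suppress_if :: "'a \<Rightarrow> 'a set \<times> ('a \<times> 'a) set \<Rightarrow> 'a set \<times> ('a \<times> 'a) set" where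
  "suppress_if v G = (let (V, A) = G in
     if v \<in> V \<and> indeg A v = 1 \<and> outdeg A v = 1
     then (V - {v}, (A - {(parent A v, v), (v, child A v)}) \<union> {(parent A v, child A v)})
     else G)"

definition is_cherry :: "'a set \<Rightarrow> ('a \<times> 'a) set \<Rightarrow> 'a \<Rightarrow> 'a \<Rightarrow> bool" where
  "is_cherry V A x y \<longleftrightarrow> x \<in> V \<and> y \<in> V \<and> x \<noteq> y \<and> is_leaf A x \<and> is_leaf A y
     \<and> (\<exists>p. (p, x) \<in> A \<and> (p, y) \<in> A)"

definition is_ret_cherry :: "'a set \<Rightarrow> ('a \<times> 'a) set \<Rightarrow> 'a \<Rightarrow> 'a \<Rightarrow> bool" where
  "is_ret_cherry V A x y \<longleftrightarrow> x \<in> V \<and> y \<in> V \<and> x \<noteq> y \<and> is_leaf A x \<and> is_leaf A y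
     \<and> is_reticulation A (parent A x) \<and> (parent A y, parent A x) \<in> A"

definition reduce_pair :: "'a \<Rightarrow> 'a \<Rightarrow> 'a set \<times> ('a \<times> 'a) set \<Rightarrow> 'a set \<times> ('a \<times> 'a) set" where
  "reduce_pair x y G = (let (V, A) = G in
     if is_cherry V A x y then
       suppress_if (parent A x) (V - {x}, A - {(parent A x, x)})
     else if is_ret_cherry V A x y then
       suppress_if (parent A y) (suppress_if (parent A x) (V, A - {(parent A y, parent A x)}))
     else G)"

definition reduction_step :: "'a set \<times> ('a \<times> 'a) set \<Rightarrow> 'a set \<times> ('a \<times> 'a) set \<Rightarrow> bool" where
  "reduction_step G G' \<longleftrightarrow> (\<exists>x y. G' = reduce_pair x y G)"

definition orchard :: "'a set \<Rightarrow> ('a \<times> 'a) set \<Rightarrow> bool" where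
  "orchard V A \<longleftrightarrow> (\<exists>V' A'. reduction_step\<^sup>*\<^sup>* (V, A) (V', A')
     \<and> is_tree V' A' \<and> card {v \<in> V'. is_leaf A' v} = 1)"

definition hgt_consistent :: "'a set \<Rightarrow> ('a \<times> 'a) set \<Rightarrow> ('a \<Rightarrow> real) \<Rightarrow> bool" where
  "hgt_consistent V A t \<longleftrightarrow>
     (\<forall>(u, v) \<in> A. t u \<le> t v \<and> (t u = t v \<longrightarrow> is_reticulation A v))
     \<and> (\<forall>u\<in>V. \<not> is_leaf A u \<longrightarrow> (\<exists>v. (u, v) \<in> A \<and> t u < t v))
     \<and> (\<forall>r\<in>V. is_reticulation A r \<longrightarrow>
          (\<forall>u v. (u, r) \<in> A \<and> (v, r) \<in> A \<and> u \<noteq> v \<longrightarrow> ((t u = t r) \<noteq> (t v = t r))))"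

definition ret_at_top :: "'a set \<Rightarrow> ('a \<times> 'a) set \<Rightarrow> nat \<Rightarrow> (nat \<Rightarrow> 'a) \<Rightarrow> (nat \<Rightarrow> 'a)
    \<Rightarrow> (nat \<Rightarrow> 'a) \<Rightarrow> (nat \<Rightarrow> 'a) \<Rightarrow> bool" where
  "ret_at_top V A k a b x y \<longleftrightarrow> k \<ge> 1 \<and>
     (\<exists>\<rho> v\<rho>. \<rho> \<in> V \<and> is_root A \<rho> \<and> (\<rho>, v\<rho>) \<in> A
        \<and> (v\<rho>, a 1) \<in> A \<and> (v\<rho>, b 1) \<in> A
        \<and> (\<forall>i. 1 \<le> i \<and> i < k \<longrightarrow> (a i, a (Suc i)) \<in> A \<and> (b i, b (Suc i)) \<in> A))
     \<and> inj_on a {1..k} \<and> inj_on b {1..k} \<and> a ` {1..k} \<inter> b ` {1..k} = {}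
     \<and> (\<forall>i\<in>{1..k}. (x i, y i) \<in> A \<and> is_reticulation A (y i) \<and> {x i, y i} = {a i, b i})
     \<and> (\<forall>c d. (y k, c) \<in> A \<and> (x k, d) \<in> A \<and> d \<noteq> y k \<longrightarrow> (c, d) \<notin> A \<and> (d, c) \<notin> A)"

end

theory Submission
  imports Defs
begin

text \<open>Walk down the two paths of the top simultaneously. If the tails of the
arcs entering \<open>a i\<close> and \<open>b i\<close> carry the same label, the horizontal arc
between \<open>a i\<close> and \<open>b i\<close> forces \<open>t (a i) = t (b i)\<close>: its reticulation end
has two parents, its horizontal partner and a path node whose label is at
most that of the partner; as exactly one parent shares the reticulation's
label, it must be the partner. The child of the root is the common tail for
\<open>i = 1\<close>.\<close>

lemma hgt_consistent_arc_le:
  assumes "hgt_consistent V A t" and "(u, v) \<in> A"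
  shows "t u \<le> t v"
  using assms unfolding hgt_consistent_def by fast

lemma hgt_consistent_ret_parent_eq:
  assumes h: "hgt_consistent V A t" and "r \<in> V" and "is_reticulation A r"
    and "(p, r) \<in> A" and ur: "(u, r) \<in> A" and "p \<noteq> u" and "t p \<le> t u"
  shows "t u = t r"
proof -
  have "(t p = t r) \<noteq> (t u = t r)"
    using h assms(2-6) unfolding hgt_consistent_def by blast
  moreover have "t u \<le> t r" using hgt_consistent_arc_le[OF h ur] .
  ultimately show ?thesis using \<open>t p \<le> t u\<close> by linarith
qed

lemma hgt_consistent_horizontal_arc_eq:
  assumes h: "hgt_consistent V A t" and sub: "A \<subseteq> V \<times> V"
    and pa: "(p, a) \<in> A" and qb: "(q, b) \<in> A" and "t p = t q"
    and "p \<noteq> b" and "q \<noteq> a"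
    and xy: "(x, y) \<in> A" and ret: "is_reticulation A y"
    and "{x, y} = {a, b}" and "a \<noteq> b"
  shows "t a = t b"
proof -
  have yV: "y \<in> V" using xy sub by blast
  have "(x = a \<and> y = b) \<or> (x = b \<and> y = a)"
    using \<open>{x, y} = {a, b}\<close> \<open>a \<noteq> b\<close> by (auto simp: doubleton_eq_iff)
  then show ?thesis
  proof
    assume "x = a \<and> y = b"
    moreover have "t q \<le> t a" using hgt_consistent_arc_le[OF h pa] \<open>t p = t q\<close> by simp
    ultimately show ?thesis
      using hgt_consistent_ret_parent_eq[OF h yV ret, of q a] qb xy \<open>q \<noteq> a\<close> by simp
  next
    assume "x = b \<and> y = a"
    moreover have "t p \<le> t b" using hgt_consistent_arc_le[OF h qb] \<open>t p = t q\<close> by simp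
    ultimately show ?thesis
      using hgt_consistent_ret_parent_eq[OF h yV ret, of p b] pa xy \<open>p \<noteq> b\<close> by simp
  qed
qed

lemma ret_at_top_first_arcs:
  assumes "ret_at_top V A k a b x y"
  obtains v where "(v, a 1) \<in> A" and "(v, b 1) \<in> A"
  using assms unfolding ret_at_top_def by blast

lemma ret_at_top_path_arcs:
  assumes "ret_at_top V A k a b x y" and "1 \<le> i" and "i < k"
  shows "(a i, a (Suc i)) \<in> A \<and> (b i, b (Suc i)) \<in> A"
proof -
  have "\<forall>i. 1 \<le> i \<and> i < k \<longrightarrow> (a i, a (Suc i)) \<in> A \<and> (b i, b (Suc i)) \<in> A"
    using assms(1) unfolding ret_at_top_def by (elim conjE exE) assumption
  then show ?thesis using assms(2,3) by blast
qed

lemma ret_at_top_horizontal_arc: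
  assumes "ret_at_top V A k a b x y" and "i \<in> {1..k}"
  shows "(x i, y i) \<in> A \<and> is_reticulation A (y i) \<and> {x i, y i} = {a i, b i}"
proof -
  have "\<forall>i\<in>{1..k}. (x i, y i) \<in> A \<and> is_reticulation A (y i) \<and> {x i, y i} = {a i, b i}"
    using assms(1) unfolding ret_at_top_def by (elim conjE) assumption
  then show ?thesis using assms(2) by blast
qed

lemma ret_at_top_paths_disjoint:
  assumes "ret_at_top V A k a b x y" and "i \<in> {1..k}" and "j \<in> {1..k}"
  shows "a i \<noteq> b j"
  using assms unfolding ret_at_top_def by (elim conjE) blast

lemma ret_at_top_paths_eq:
  assumes top: "ret_at_top V A k a b x y" and h: "hgt_consistent V A t"
    and sub: "A \<subseteq> V \<times> V" and irrefl: "\<And>u. (u, u) \<notin> A"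
    and "1 \<le> i" and "i \<le> k"
  shows "t (a i) = t (b i)"
  using \<open>1 \<le> i\<close> \<open>i \<le> k\<close>
proof (induction i rule: dec_induct)
  case base
  then have one: "1 \<in> {1..k}" by simp
  obtain v where va: "(v, a 1) \<in> A" and vb: "(v, b 1) \<in> A"
    using ret_at_top_first_arcs[OF top] .
  have "v \<noteq> b 1" "v \<noteq> a 1" using va vb irrefl by blast+
  then show ?case
    using hgt_consistent_horizontal_arc_eq[OF h sub va vb refl]
      ret_at_top_horizontal_arc[OF top one] ret_at_top_paths_disjoint[OF top one one]
    by blast
next
  case (step n)
  then have n: "n \<in> {1..k}" and sn: "Suc n \<in> {1..k}" by simp_all
  have "(a n, a (Suc n)) \<in> A" "(b n, b (Suc n)) \<in> A"
    using ret_at_top_path_arcs[OF top, of n] n sn by auto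
  moreover have "a n \<noteq> b (Suc n)" "b n \<noteq> a (Suc n)"
    using ret_at_top_paths_disjoint[OF top] n sn by metis+
  moreover have "t (a n) = t (b n)" using step.IH n by simp
  ultimately show ?case
    using hgt_consistent_horizontal_arc_eq[of V A t "a n" "a (Suc n)" "b n" "b (Suc n)"] h sub
      ret_at_top_horizontal_arc[OF top sn] ret_at_top_paths_disjoint[OF top sn sn]
    by blast
qed

theorem mainTheorem9:
  fixes V :: "'a set" and A :: "('a \<times> 'a) set" and t :: "'a \<Rightarrow> real"
    and k :: nat and a b x y :: "nat \<Rightarrow> 'a"
  assumes "binary_network V A"
    and "orchard V A"
    and "ret_at_top V A k a b x y"
    and "hgt_consistent V A t"
  shows "\<forall>i\<in>{1..k}. t (x i) = t (y i)"
proof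
  fix i assume i: "i \<in> {1..k}"
  have sub: "A \<subseteq> V \<times> V" and "acyclic A"
    using assms(1) unfolding binary_network_def network_def by auto
  then have irrefl: "\<And>u. (u, u) \<notin> A" by (meson acyclic_def r_into_trancl')
  have "{x i, y i} = {a i, b i}"
    using ret_at_top_horizontal_arc[OF assms(3) i] by blast
  moreover have "t (a i) = t (b i)"
    using ret_at_top_paths_eq[OF assms(3,4) sub irrefl] i by simp
  ultimately show "t (x i) = t (y i)" by (auto simp: doubleton_eq_iff)
qed

end
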